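(* Let $p>2$ be a prime, let $b\in\mathbb{Q}_p$ with $0<|b|_p<1$, let $f(x)=\frac{x^2}{bx+1}$ for $x\in\mathbb{Q}_p\setminus\{-\frac1b\}$, let $x_2=\frac{1}{1-b}$, and let $0<\rho<1$. Then for every ball $B_r(y)\subset S_\rho(x_2)$ with $r<\rho$, $$B_r(y)\cap B_r(f(y))=\emptyset.$$
   Context: $|\cdot|_p$ is the $p$-adic norm on $\mathbb{Q}_p$. For $c\in\mathbb{Q}_p$ and $r>0$: $B_r(c)=\{x\in\mathbb{Q}_p:|x-c|_p<r\}$ and $S_r(c)=\{x\in\mathbb{Q}_p:|x-c|_p=r\}$. *)

theory Defs
  imports Complex_Main "HOL-Computational_Algebra.Primes"
begin

definition padic_val_rat :: "nat \<Rightarrow> rat \<Rightarrow> int" where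
  "padic_val_rat p q =
     int (multiplicity (int p) (fst (quotient_of q)))
       - int (multiplicity (int p) (snd (quotient_of q)))"

definition padic_abs_rat :: "nat \<Rightarrow> rat \<Rightarrow> real" where
  "padic_abs_rat p q =
     (if q = 0 then 0 else real p powr (- real_of_int (padic_val_rat p q)))"

text \<open>We characterise it up to isometric
  isomorphism: a field of characteristic 0 with an absolute value that is
  non-archimedean, restricts to the p-adic absolute value on the rationals,
  in which the rationals are dense, and which is complete.
  Every such (K, nrm) is isometrically isomorphic to (Q_p, |.|_p).\<close>

definition is_padic_field :: "nat \<Rightarrow> ('a::field_char_0 \<Rightarrow> real) \<Rightarrow> bool" where
  "is_padic_field p nrm \<longleftrightarrow>
     (\<forall>x. nrm x = 0 \<longleftrightarrow> x = 0) \<and>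
     (\<forall>x. nrm x \<ge> 0) \<and>
     (\<forall>x y. nrm (x * y) = nrm x * nrm y) \<and>
     (\<forall>x y. nrm (x + y) \<le> max (nrm x) (nrm y)) \<and>
     (\<forall>q. nrm (of_rat q) = padic_abs_rat p q) \<and>
     (\<forall>x. \<forall>e>0. \<exists>q. nrm (x - of_rat q) < e) \<and>
     (\<forall>X :: nat \<Rightarrow> 'a.
        (\<forall>e>0. \<exists>N. \<forall>m\<ge>N. \<forall>n\<ge>N. nrm (X m - X n) < e) \<longrightarrow>
        (\<exists>L. \<forall>e>0. \<exists>N. \<forall>n\<ge>N. nrm (X n - L) < e))"

definition pball :: "('a::ab_group_add \<Rightarrow> real) \<Rightarrow> real \<Rightarrow> 'a \<Rightarrow> 'a set" where
  "pball nrm r c = {x. nrm (x - c) < r}"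

definition psphere :: "('a::ab_group_add \<Rightarrow> real) \<Rightarrow> real \<Rightarrow> 'a \<Rightarrow> 'a set" where
  "psphere nrm r c = {x. nrm (x - c) = r}"

end

theory Submission
  imports Defs
begin

text \<open>Near the fixed point \<open>x2\<close> one has \<open>|y|_p = |1 - b|_p = |b y + 1|_p = 1\<close>, so the identity
  \<open>f y - y = y (1 - b) (y - x2) / (b y + 1)\<close> gives \<open>|f y - y|_p = |y - x2|_p = \<rho>\<close>: every
  point of the sphere is moved by exactly \<open>\<rho>\<close>. In an ultrametric space two balls of radius
  \<open>r \<le> \<rho>\<close> whose centres are at distance \<open>\<rho>\<close> are disjoint.\<close>

lemma quadratic_map_displacement:
  fixes b y :: "'a::field"
  assumes "1 - b \<noteq> 0" "b * y + 1 \<noteq> 0"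
  shows "y^2 / (b * y + 1) - y = y * (1 - b) * (y - 1 / (1 - b)) / (b * y + 1)"
proof -
  have "y * (1 - b) * (y - 1 / (1 - b)) = y^2 - y * (b * y + 1)"
    using assms(1) by (simp add: power2_eq_square right_diff_distrib left_diff_distrib
      divide_simps) (simp add: algebra_simps)
  then show ?thesis
    using assms(2) by (simp add: diff_divide_distrib)
qed

locale nonarchimedean_abs =
  fixes nrm :: "'a::field \<Rightarrow> real"
  assumes abs_eq_0_iff: "nrm x = 0 \<longleftrightarrow> x = 0"
    and abs_nonneg: "nrm x \<ge> 0"
    and abs_mult: "nrm (x * y) = nrm x * nrm y"
    and abs_add_le_max: "nrm (x + y) \<le> max (nrm x) (nrm y)"
begin

lemma abs_zero [simp]: "nrm 0 = 0"
  using abs_eq_0_iff by simp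

lemma abs_one: "nrm 1 = 1"
  using abs_mult[of 1 1] abs_eq_0_iff[of 1] by simp

lemma abs_minus: "nrm (- x) = nrm x"
proof -
  have "nrm (- 1) * nrm (- 1) = 1"
    using abs_mult[of "- 1" "- 1"] abs_one by simp
  then have "(nrm (- 1) - 1) * (nrm (- 1) + 1) = 0"
    by (simp add: algebra_simps)
  then have "nrm (- 1) = 1"
    using abs_nonneg[of "- 1"] by auto
  then show ?thesis
    using abs_mult[of "- 1" x] by simp
qed

lemma abs_diff_commute: "nrm (x - y) = nrm (y - x)"
  using abs_minus[of "x - y"] by simp

lemma abs_divide: "nrm (x / y) = nrm x / nrm y"
proof (cases "y = 0")
  case False
  then have "nrm (x / y) * nrm y = nrm x"
    using abs_mult[of "x / y" y] by simp
  then show ?thesis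
    using False abs_eq_0_iff[of y] by (simp add: field_simps)
qed simp

lemma abs_add_eq_right: "nrm x < nrm y \<Longrightarrow> nrm (x + y) = nrm y"
  using abs_add_le_max[of x y] abs_add_le_max[of "x + y" "- x"] abs_minus[of x]
  by (simp add: max_def split: if_splits)

lemma pball_disjoint:
  assumes "r \<le> nrm (a - c)"
  shows "pball nrm r a \<inter> pball nrm r c = {}"
proof -
  have "\<not> (nrm (w - a) < r \<and> nrm (w - c) < r)" for w
    using abs_add_le_max[of "a - w" "w - c"] abs_diff_commute[of w a] assms by auto
  then show ?thesis
    unfolding pball_def by blast
qed

lemma abs_one_add: "nrm x < 1 \<Longrightarrow> nrm (1 + x) = 1"
  using abs_add_eq_right[of x 1] abs_one by (simp add: add.commute)

lemma abs_eq_1_near_fixed_point: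
  assumes "nrm b < 1" and "nrm (y - 1 / (1 - b)) < 1"
  shows "nrm y = 1"
proof -
  have "nrm (1 / (1 - b)) = 1"
    using abs_one_add[of "- b"] assms(1) abs_minus abs_divide abs_one by simp
  then show ?thesis
    using abs_add_eq_right[of "y - 1 / (1 - b)" "1 / (1 - b)"] assms(2) by simp
qed

lemma displacement_near_fixed_point:
  assumes "nrm b < 1" and "nrm (y - 1 / (1 - b)) < 1"
  shows "nrm (y^2 / (b * y + 1) - y) = nrm (y - 1 / (1 - b))"
proof -
  have one_minus_b: "nrm (1 - b) = 1"
    using abs_one_add[of "- b"] assms(1) abs_minus by simp
  have y: "nrm y = 1"
    using abs_eq_1_near_fixed_point assms .
  have denominator: "nrm (b * y + 1) = 1"
    using abs_one_add[of "b * y"] assms(1) abs_mult y by (simp add: add.commute)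
  have "y^2 / (b * y + 1) - y = y * (1 - b) * (y - 1 / (1 - b)) / (b * y + 1)"
    using one_minus_b denominator abs_eq_0_iff by (intro quadratic_map_displacement) auto
  then show ?thesis
    using abs_mult abs_divide one_minus_b y denominator by simp
qed

end

lemma is_padic_field_nonarchimedean_abs:
  "is_padic_field p nrm \<Longrightarrow> nonarchimedean_abs nrm"
  unfolding is_padic_field_def by unfold_locales blast+

theorem lemma4p2:
  fixes p :: nat and nrm :: "'a::field_char_0 \<Rightarrow> real"
    and b :: 'a and f :: "'a \<Rightarrow> 'a" and x2 :: 'a and \<rho> :: real
  assumes "prime p" and "p > 2"
    and "is_padic_field p nrm"
    and "0 < nrm b" and "nrm b < 1"
    and "\<And>x. x \<noteq> - 1 / b \<Longrightarrow> f x = x^2 / (b * x + 1)"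
    and "x2 = 1 / (1 - b)"
    and "0 < \<rho>" and "\<rho> < 1"
  shows "\<forall>y r. 0 < r \<and> r < \<rho> \<and> pball nrm r y \<subseteq> psphere nrm \<rho> x2 \<longrightarrow>
           pball nrm r y \<inter> pball nrm r (f y) = {}"
proof (intro allI impI)
  fix y r
  assume ball: "0 < r \<and> r < \<rho> \<and> pball nrm r y \<subseteq> psphere nrm \<rho> x2"
  interpret nonarchimedean_abs nrm
    using assms(3) by (rule is_padic_field_nonarchimedean_abs)
  have "y \<in> pball nrm r y"
    using ball unfolding pball_def by simp
  then have y: "nrm (y - x2) = \<rho>"
    using ball unfolding psphere_def by blast
  have "nrm (b * y) < 1"
    using abs_mult abs_eq_1_near_fixed_point[of b y] assms(5,7,9) y by simp
  then have "b * y + 1 \<noteq> 0"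
    using abs_one_add[of "b * y"] by (auto simp: add.commute)
  moreover have "b \<noteq> 0"
    using assms(4) by auto
  ultimately have "y \<noteq> - 1 / b"
    by (auto simp: field_simps)
  then have "nrm (y - f y) = \<rho>"
    using displacement_near_fixed_point[of b y] assms(5-7,9) y abs_diff_commute by simp
  then show "pball nrm r y \<inter> pball nrm r (f y) = {}"
    using pball_disjoint ball by simp
qed

end
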